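(* Let $Z$ be a random variable taking values in $\mathbb{D}$ whose law $\mathrm{d}\Lambda(z)$ is rotationally invariant. Then for fixed $w\in\partial\mathbb{D}$, the random variable \[ |Z|\,\phi_{-|Z|w}\Big(\frac{Z}{|Z|}\Big)=Z\frac{1+\overline{Z}w}{1+Z\overline{w}} \] has law $P_{\mathbb{D}}(z,w)\,\mathrm{d}\Lambda(z)$ on $\mathbb{D}$.
   Context: $P_{\mathbb{D}}(z,e^{i\theta})=\frac{1-|z|^2}{|e^{i\theta}-z|^2}$ is the Poisson kernel of the unit disk. For $z_0\in\mathbb{D}$, $\phi_{z_0}(z)=\frac{z-z_0}{1-\overline{z_0}z}$. *)

theory Defs
  imports "HOL-Probability.Probability"
begin

definition poisson_kernel_disk :: "complex \<Rightarrow> complex \<Rightarrow> real" where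
  "poisson_kernel_disk z \<zeta> = (1 - (cmod z)^2) / (cmod (\<zeta> - z))^2"

definition disk_mobius :: "complex \<Rightarrow> complex \<Rightarrow> complex" where
  "disk_mobius z0 z = (z - z0) / (1 - cnj z0 * z)"

end

theory Submission
  imports Defs
begin

(* Write T z = z (1 + cnj z w) / (1 + z cnj w) with |w| = 1. Since 1 + cnj z w and 1 + z cnj w are
   conjugate, T maps every circle |z| = r < 1 onto itself, with inverse z \<mapsto> z (1 - cnj z w) / (1 - z cnj w).
   For w = e^{ia} this inverse reads t \<mapsto> t + 2 arctan (r sin (t - a) / (1 - r cos (t - a))) in the angular
   coordinate, and its derivative is exactly the Poisson kernel P(r e^{it}, w). So substituting on each
   circle, the mean of f \<circ> T equals the mean of f P(-, w). A rotation invariant law is the average of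
   its own rotations (Fubini), and integrating the circle identity against it gives the claim. *)

lemma borel_measurable_cnj [measurable]: "cnj \<in> borel_measurable borel"
  by (intro borel_measurable_continuous_onI continuous_intros)

lemma borel_measurable_cis [measurable]: "cis \<in> borel_measurable borel"
  by (intro borel_measurable_continuous_onI continuous_intros)

lemma nn_integral_lborel_shift:
  fixes g :: "real \<Rightarrow> ennreal"
  assumes [measurable]: "g \<in> borel_measurable borel"
  shows "(\<integral>\<^sup>+x. g x \<partial>lborel) = (\<integral>\<^sup>+x. g (x + a) \<partial>lborel)"
  using nn_integral_real_affine[of g 1 a] by (simp add: add.commute)

lemma nn_integral_periodic_interval_shift_nonneg:
  fixes f :: "real \<Rightarrow> ennreal"
  assumes [measurable]: "f \<in> borel_measurable borel" and periodic: "\<And>x. f (x + p) = f x"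
    and c: "0 \<le> c" "c \<le> p"
  shows "(\<integral>\<^sup>+x. f x * indicator {c..c+p} x \<partial>lborel) = (\<integral>\<^sup>+x. f x * indicator {0..p} x \<partial>lborel)"
proof -
  have "(\<integral>\<^sup>+x. f x * indicator {c..c+p} x \<partial>lborel)
      = (\<integral>\<^sup>+x. f x * indicator {c..p} x + f x * indicator {p<..c+p} x \<partial>lborel)"
    using c by (intro nn_integral_cong) (auto simp: indicator_def)
  also have "\<dots> = (\<integral>\<^sup>+x. f x * indicator {c..p} x \<partial>lborel) + (\<integral>\<^sup>+x. f x * indicator {p<..c+p} x \<partial>lborel)"
    by (intro nn_integral_add) auto
  also have "(\<integral>\<^sup>+x. f x * indicator {p<..c+p} x \<partial>lborel)
      = (\<integral>\<^sup>+x. f (x + p) * indicator {p<..c+p} (x + p) \<partial>lborel)"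
    by (rule nn_integral_lborel_shift) auto
  also have "\<dots> = (\<integral>\<^sup>+x. f x * indicator {0<..c} x \<partial>lborel)"
    by (intro nn_integral_cong) (auto simp: periodic indicator_def)
  also have "(\<integral>\<^sup>+x. f x * indicator {c..p} x \<partial>lborel) + (\<integral>\<^sup>+x. f x * indicator {0<..c} x \<partial>lborel)
      = (\<integral>\<^sup>+x. f x * indicator {c..p} x + f x * indicator {0<..c} x \<partial>lborel)"
    by (intro nn_integral_add[symmetric]) auto
  also have "\<dots> = (\<integral>\<^sup>+x. f x * indicator {0..p} x \<partial>lborel)"
  proof (rule nn_integral_cong_AE)
    have "AE x in lborel. x \<noteq> 0 \<and> x \<noteq> c"
      using AE_lborel_singleton[of 0] AE_lborel_singleton[of c] by eventually_elim auto
    then show "AE x in lborel. f x * indicator {c..p} x + f x * indicator {0<..c} x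
                               = f x * indicator {0..p} x"
      by eventually_elim (use c in \<open>auto simp: indicator_def\<close>)
  qed
  finally show ?thesis .
qed

lemma nn_integral_periodic_interval_shift:
  fixes f :: "real \<Rightarrow> ennreal"
  assumes [measurable]: "f \<in> borel_measurable borel" and periodic: "\<And>x. f (x + p) = f x"
    and c: "\<bar>c\<bar> \<le> p"
  shows "(\<integral>\<^sup>+x. f x * indicator {c..c+p} x \<partial>lborel) = (\<integral>\<^sup>+x. f x * indicator {0..p} x \<partial>lborel)"
proof (cases "0 \<le> c")
  case True
  then show ?thesis
    using nn_integral_periodic_interval_shift_nonneg[OF assms(1) periodic] c by auto
next
  case False
  have "(\<integral>\<^sup>+x. f x * indicator {c+p..c+p+p} x \<partial>lborel)
      = (\<integral>\<^sup>+x. f (x + p) * indicator {c+p..c+p+p} (x + p) \<partial>lborel)"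
    by (rule nn_integral_lborel_shift) auto
  also have "\<dots> = (\<integral>\<^sup>+x. f x * indicator {c..c+p} x \<partial>lborel)"
    by (intro nn_integral_cong) (auto simp: periodic indicator_def)
  finally show ?thesis
    using nn_integral_periodic_interval_shift_nonneg[OF assms(1) periodic, of "c+p"] c False by auto
qed

lemma nn_integral_periodic_translate:
  fixes f :: "real \<Rightarrow> ennreal"
  assumes [measurable]: "f \<in> borel_measurable borel" and periodic: "\<And>x. f (x + p) = f x"
    and c: "\<bar>c\<bar> \<le> p"
  shows "(\<integral>\<^sup>+x. f (x + c) * indicator {0..p} x \<partial>lborel) = (\<integral>\<^sup>+x. f x * indicator {0..p} x \<partial>lborel)"
proof -
  have "(\<integral>\<^sup>+x. f x * indicator {c..c+p} x \<partial>lborel)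
      = (\<integral>\<^sup>+x. f (x + c) * indicator {c..c+p} (x + c) \<partial>lborel)"
    by (rule nn_integral_lborel_shift) auto
  also have "\<dots> = (\<integral>\<^sup>+x. f (x + c) * indicator {0..p} x \<partial>lborel)"
    by (intro nn_integral_cong) (auto simp: indicator_def)
  finally show ?thesis
    using nn_integral_periodic_interval_shift[OF assms] by simp
qed

lemma cis_two_arctan: "cis (2 * arctan x) = (1 + \<i> * of_real x) / (1 - \<i> * of_real x)"
proof -
  have sqrt_sq: "of_real (sqrt (1 + x\<^sup>2)) * of_real (sqrt (1 + x\<^sup>2)) = (of_real (1 + x\<^sup>2) :: complex)"
    by (simp flip: of_real_mult add: add_nonneg_nonneg)
  have cis_arctan: "cis (arctan x) = (1 + \<i> * of_real x) / of_real (sqrt (1 + x\<^sup>2))"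
    by (simp add: complex_eq_iff cos_arctan sin_arctan)
  have "cis (2 * arctan x) = cis (arctan x) * cis (arctan x)"
    by (simp only: cis_mult mult_2)
  also have "\<dots> = (1 + \<i> * of_real x) * (1 + \<i> * of_real x) / of_real (1 + x\<^sup>2)"
    by (simp only: cis_arctan times_divide_times_eq sqrt_sq)
  also have "(of_real (1 + x\<^sup>2) :: complex) = (1 + \<i> * of_real x) * (1 - \<i> * of_real x)"
    by (simp add: algebra_simps power2_eq_square)
  also have "(1 + \<i> * of_real x) * (1 + \<i> * of_real x) / \<dots> = (1 + \<i> * of_real x) / (1 - \<i> * of_real x)"
    by (rule mult_divide_mult_cancel_left_if[THEN trans]) simp
  finally show ?thesis .
qed

lemma mult_cos_le_abs: "(r::real) * cos b \<le> \<bar>r\<bar>"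
proof -
  have "r * cos b \<le> \<bar>r\<bar> * \<bar>cos b\<bar>"
    by (metis abs_ge_self abs_mult)
  also have "\<dots> \<le> \<bar>r\<bar>"
    by (simp add: mult_left_le)
  finally show ?thesis .
qed

lemma one_minus_mult_cos_pos: "\<bar>r::real\<bar> < 1 \<Longrightarrow> 0 < 1 - r * cos b"
  using mult_cos_le_abs[of r b] by linarith

lemma one_minus_two_mult_cos_plus_sq_pos: "\<bar>r::real\<bar> < 1 \<Longrightarrow> 0 < 1 - 2 * r * cos b + r\<^sup>2"
proof -
  assume r: "\<bar>r\<bar> < 1"
  have "(1 - \<bar>r\<bar>)\<^sup>2 = 1 - 2 * \<bar>r\<bar> + r\<^sup>2"
    by (simp add: power2_eq_square algebra_simps)
  also have "\<dots> \<le> 1 - 2 * r * cos b + r\<^sup>2"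
    using mult_cos_le_abs[of r b] by simp
  finally have "(1 - \<bar>r\<bar>)\<^sup>2 \<le> 1 - 2 * r * cos b + r\<^sup>2" .
  moreover have "0 < (1 - \<bar>r\<bar>)\<^sup>2"
    using r by simp
  ultimately show ?thesis by linarith
qed

lemma poisson_kernel_disk_polar:
  "poisson_kernel_disk (of_real r * cis t) (cis a) = (1 - r\<^sup>2) / (1 - 2 * r * cos (t - a) + r\<^sup>2)"
proof -
  have "(cmod (cis a - of_real r * cis t))\<^sup>2 = (cos a - r * cos t)\<^sup>2 + (sin a - r * sin t)\<^sup>2"
    by (simp add: cmod_power2)
  also have "\<dots> = ((sin a)\<^sup>2 + (cos a)\<^sup>2) - 2 * r * (cos t * cos a + sin t * sin a)
                   + r\<^sup>2 * ((sin t)\<^sup>2 + (cos t)\<^sup>2)"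
    by algebra
  also have "\<dots> = 1 - 2 * r * cos (t - a) + r\<^sup>2"
    by (simp only: sin_cos_squared_add cos_diff)
  finally show ?thesis
    by (simp add: poisson_kernel_disk_def norm_mult)
qed

definition disk_twist :: "complex \<Rightarrow> complex \<Rightarrow> complex" where
  "disk_twist w z = z * (1 + cnj z * w) / (1 + z * cnj w)"

lemma borel_measurable_disk_twist [measurable]: "disk_twist w \<in> borel_measurable borel"
  unfolding disk_twist_def by measurable

lemma disk_mobius_polar_eq_disk_twist:
  assumes "z \<noteq> 0"
  shows "of_real (cmod z) * disk_mobius (- (of_real (cmod z) * w)) (z / of_real (cmod z)) = disk_twist w z"
proof -
  define r where "r = cmod z"
  have r: "complex_of_real r \<noteq> 0" "complex_of_real r * complex_of_real r = z * cnj z"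
    using assms complex_norm_square[of z] by (simp_all add: r_def power2_eq_square)
  have "z / of_real r - - (of_real r * w) = (z + of_real r * of_real r * w) / of_real r"
    using r(1) by (simp add: divide_simps)
  moreover have "1 - cnj (- (of_real r * w)) * (z / of_real r) = 1 + z * cnj w"
    using r(1) by simp
  ultimately have "of_real r * disk_mobius (- (of_real r * w)) (z / of_real r)
      = (z + of_real r * of_real r * w) / (1 + z * cnj w)"
    using r(1) by (simp add: disk_mobius_def)
  also have "\<dots> = disk_twist w z"
    unfolding r(2) disk_twist_def by (simp add: algebra_simps)
  finally show ?thesis
    unfolding r_def .
qed

lemma disk_twist_inverse:
  assumes w: "cmod w = 1" and u: "cmod u < 1"
  shows "disk_twist w (disk_twist (- w) u) = u"
proof -
  have ww: "w * cnj w = 1"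
    using complex_norm_square[of w] w by simp
  define q where "q = u * cnj u"
  have "cmod (u * cnj w) < 1"
    using u w by (simp add: norm_mult)
  then have den: "1 - u * cnj w \<noteq> 0"
    by auto
  then have den_cnj: "1 - cnj u * w \<noteq> 0"
    by (metis complex_cnj_cnj complex_cnj_diff complex_cnj_mult complex_cnj_one complex_cnj_zero)
  have "cmod q < 1"
    using mult_strict_mono'[OF u u] by (simp add: q_def norm_mult)
  then have q: "1 - q \<noteq> 0"
    by auto
  define v where "v = u * (1 - cnj u * w) / (1 - u * cnj w)"
  have v: "disk_twist (- w) u = v"
    by (simp add: disk_twist_def v_def)
  have "1 + cnj v * w = ((1 - cnj u * w) + cnj u * (1 - u * cnj w) * w) / (1 - cnj u * w)"
    using den_cnj by (simp add: v_def divide_simps)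
  also have "(1 - cnj u * w) + cnj u * (1 - u * cnj w) * w = 1 - q"
    by (simp add: q_def algebra_simps) (metis ww mult.assoc mult.left_commute mult_1_right)
  finally have num: "1 + cnj v * w = (1 - q) / (1 - cnj u * w)" .
  have "1 + v * cnj w = ((1 - u * cnj w) + u * (1 - cnj u * w) * cnj w) / (1 - u * cnj w)"
    using den by (simp add: v_def divide_simps)
  also have "(1 - u * cnj w) + u * (1 - cnj u * w) * cnj w = 1 - q"
    by (simp add: q_def algebra_simps) (metis ww mult.assoc mult.commute mult.left_commute mult_1_right)
  finally have denom: "1 + v * cnj w = (1 - q) / (1 - u * cnj w)" .
  have "disk_twist w v = v * ((1 - q) / (1 - cnj u * w)) / ((1 - q) / (1 - u * cnj w))"
    unfolding disk_twist_def num denom ..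
  also have "\<dots> = u"
    using den den_cnj q by (simp add: v_def divide_simps)
  finally show ?thesis
    unfolding v .
qed

definition twist_angle :: "real \<Rightarrow> real \<Rightarrow> real \<Rightarrow> real" where
  "twist_angle r a t = t + 2 * arctan (r * sin (t - a) / (1 - r * cos (t - a)))"

lemma twist_angle_periodic: "twist_angle r a (t + 2*pi) = twist_angle r a t + 2*pi"
proof -
  have "t + 2*pi - a = (t - a) + 2*pi"
    by simp
  then show ?thesis
    unfolding twist_angle_def by (simp only: sin_periodic cos_periodic)
qed

lemma abs_twist_angle_zero_le: "\<bar>twist_angle r a 0\<bar> \<le> 2*pi"
  unfolding twist_angle_def using arctan_bounded[of "r * sin (0 - a) / (1 - r * cos (0 - a))"]
  by linarith

lemma cis_twist_angle:
  assumes r: "\<bar>r\<bar> < 1"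
  shows "of_real r * cis (twist_angle r a t) = disk_twist (- cis a) (of_real r * cis t)"
proof -
  define c s where "c = cos (t - a)" and "s = sin (t - a)"
  have pos: "0 < 1 - r * c"
    unfolding c_def using one_minus_mult_cos_pos[OF r] .
  define x where "x = r * s / (1 - r * c)"
  have "cis (twist_angle r a t) = cis t * ((1 + \<i> * of_real x) / (1 - \<i> * of_real x))"
    unfolding twist_angle_def cis_two_arctan[symmetric] x_def c_def s_def by (simp add: cis_mult)
  also have "(1 + \<i> * of_real x) / (1 - \<i> * of_real x)
      = (of_real (1 - r * c) + \<i> * of_real (r * s)) / (of_real (1 - r * c) - \<i> * of_real (r * s))"
  proof -
    have "(of_real (1 - r * c) :: complex) \<noteq> 0"
      using pos by (metis of_real_eq_0_iff less_irrefl)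
    then show ?thesis
      by (simp add: x_def divide_simps)
  qed
  also have "of_real (1 - r * c) + \<i> * of_real (r * s) = 1 - cnj (of_real r * cis t) * cis a"
    by (simp add: c_def s_def complex_eq_iff cos_diff sin_diff algebra_simps)
  also have "of_real (1 - r * c) - \<i> * of_real (r * s) = 1 - of_real r * cis t * cnj (cis a)"
    by (simp add: c_def s_def complex_eq_iff cos_diff sin_diff algebra_simps)
  finally have "cis (twist_angle r a t) = cis t * ((1 - cnj (of_real r * cis t) * cis a) / (1 - of_real r * cis t * cnj (cis a)))" .
  moreover have "disk_twist (- cis a) (of_real r * cis t)
      = of_real r * cis t * (1 - cnj (of_real r * cis t) * cis a) / (1 - of_real r * cis t * cnj (cis a))"
    by (simp add: disk_twist_def)
  ultimately show ?thesis
    by (simp add: mult.assoc)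
qed

lemma twist_angle_has_derivative:
  assumes r: "\<bar>r\<bar> < 1"
  shows "(twist_angle r a has_real_derivative (1 - r\<^sup>2) / (1 - 2 * r * cos (t - a) + r\<^sup>2)) (at t)"
proof -
  define c s where "c = cos (t - a)" and "s = sin (t - a)"
  define D where "D = 1 - 2 * r * c + r\<^sup>2"
  have pos: "0 < 1 - r * c"
    unfolding c_def using one_minus_mult_cos_pos[OF r] .
  have D: "0 < D"
    unfolding D_def c_def using one_minus_two_mult_cos_plus_sq_pos[OF r] .
  have sc: "s\<^sup>2 + c\<^sup>2 = 1"
    by (simp add: c_def s_def)
  have "(1 - r * c)\<^sup>2 + (r * s)\<^sup>2 = 1 - 2 * r * c + r\<^sup>2 * (s\<^sup>2 + c\<^sup>2)"
    by algebra
  then have sum_sq: "(1 - r * c)\<^sup>2 + (r * s)\<^sup>2 = D"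
    by (simp add: sc D_def)
  have "(twist_angle r a has_real_derivative
          1 + 2 * (inverse (1 + (r * s / (1 - r * c))\<^sup>2) * ((r * c * (1 - r * c) - r * s * (r * s)) / (1 - r * c)\<^sup>2)))
        (at t)"
    unfolding twist_angle_def c_def s_def using pos[unfolded c_def]
    by (auto intro!: derivative_eq_intros simp: power2_eq_square algebra_simps)
  also have "inverse (1 + (r * s / (1 - r * c))\<^sup>2) * ((r * c * (1 - r * c) - r * s * (r * s)) / (1 - r * c)\<^sup>2)
      = (r * c * (1 - r * c) - r * s * (r * s)) / D"
  proof -
    have quotient: "inverse (1 + (y / x)\<^sup>2) * (X / x\<^sup>2) = X / (x\<^sup>2 + y\<^sup>2)" if "x \<noteq> 0" for x y X :: real
    proof -
      have "x\<^sup>2 + y\<^sup>2 \<noteq> 0"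
        using that by (simp add: sum_power2_eq_zero_iff)
      then show ?thesis
        using that by (simp add: field_simps)
    qed
    have "1 - r * c \<noteq> 0"
      using pos by simp
    from quotient[OF this, of "r * s"] show ?thesis
      unfolding sum_sq .
  qed
  also have "r * c * (1 - r * c) - r * s * (r * s) = r * c - r\<^sup>2 * (s\<^sup>2 + c\<^sup>2)"
    by algebra
  also have "\<dots> = r * c - r\<^sup>2"
    by (simp add: sc)
  also have "1 + 2 * ((r * c - r\<^sup>2) / D) = (1 - r\<^sup>2) / D"
    using D by (simp add: D_def field_simps)
  finally show ?thesis
    by (simp add: D_def c_def)
qed

lemma nn_integral_circle_disk_twist:
  fixes f :: "complex \<Rightarrow> ennreal"
  assumes [measurable]: "f \<in> borel_measurable borel" and r: "\<bar>r\<bar> < 1"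
  shows "(\<integral>\<^sup>+\<theta>. f (disk_twist (cis a) (of_real r * cis \<theta>)) * indicator {0..2*pi} \<theta> \<partial>lborel)
       = (\<integral>\<^sup>+\<theta>. f (of_real r * cis \<theta>) * ennreal (poisson_kernel_disk (of_real r * cis \<theta>) (cis a))
                 * indicator {0..2*pi} \<theta> \<partial>lborel)"
proof -
  define F where "F \<theta> = f (disk_twist (cis a) (of_real r * cis \<theta>))" for \<theta>
  have [measurable]: "F \<in> borel_measurable borel"
    unfolding F_def by measurable
  have F_periodic: "F (x + 2*pi) = F x" for x
    by (simp add: F_def flip: cis_mult)
  have "(\<integral>\<^sup>+\<theta>. F \<theta> * indicator {0..2*pi} \<theta> \<partial>lborel)
      = (\<integral>\<^sup>+\<theta>. F \<theta> * indicator {twist_angle r a 0..twist_angle r a (2*pi)} \<theta> \<partial>lborel)"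
    using nn_integral_periodic_interval_shift[of F, OF _ F_periodic abs_twist_angle_zero_le]
      twist_angle_periodic[of r a 0] by simp
  also have "\<dots> = (\<integral>\<^sup>+t. F (twist_angle r a t) * ennreal ((1 - r\<^sup>2) / (1 - 2 * r * cos (t - a) + r\<^sup>2))
                        * indicator {0..2*pi} t \<partial>lborel)"
  proof (rule nn_integral_substitution_aux)
    show "(twist_angle r a has_real_derivative (1 - r\<^sup>2) / (1 - 2 * r * cos (t - a) + r\<^sup>2)) (at t)" for t
      using twist_angle_has_derivative[OF r] .
    show "continuous_on {0..2*pi} (\<lambda>t. (1 - r\<^sup>2) / (1 - 2 * r * cos (t - a) + r\<^sup>2))"
      using one_minus_two_mult_cos_plus_sq_pos[OF r]
      by (intro continuous_intros) (metis order_less_irrefl)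
    show "0 \<le> (1 - r\<^sup>2) / (1 - 2 * r * cos (t - a) + r\<^sup>2)" for t
      using one_minus_two_mult_cos_plus_sq_pos[OF r] r
      by (auto intro!: divide_nonneg_pos simp: abs_square_le_1)
  qed auto
  also have "\<dots> = (\<integral>\<^sup>+t. f (of_real r * cis t) * ennreal (poisson_kernel_disk (of_real r * cis t) (cis a))
                        * indicator {0..2*pi} t \<partial>lborel)"
    using r by (simp add: F_def cis_twist_angle[OF r] disk_twist_inverse norm_mult poisson_kernel_disk_polar)
  finally show ?thesis
    unfolding F_def .
qed

lemma nn_integral_rotations_disk_twist:
  fixes f :: "complex \<Rightarrow> ennreal"
  assumes [measurable]: "f \<in> borel_measurable borel" and z: "cmod z < 1" and w: "cmod w = 1"
  shows "(\<integral>\<^sup>+\<theta>. f (disk_twist w (cis \<theta> * z)) * indicator {0..2*pi} \<theta> \<partial>lborel)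
       = (\<integral>\<^sup>+\<theta>. f (cis \<theta> * z) * ennreal (poisson_kernel_disk (cis \<theta> * z) w) * indicator {0..2*pi} \<theta> \<partial>lborel)"
proof -
  have "w \<noteq> 0"
    using w by auto
  then have w_cis: "w = cis (Arg w)"
    using w cis_Arg[of w] by (simp add: sgn_div_norm)
  define r t0 where "r = cmod z" and "t0 = Arg z"
  have r: "\<bar>r\<bar> < 1"
    using z by (simp add: r_def)
  have t0: "\<bar>t0\<bar> \<le> 2*pi"
    using Arg_bounded[of z] pi_gt_zero unfolding t0_def by linarith
  have rotate: "cis \<theta> * z = of_real r * cis (\<theta> + t0)" for \<theta>
    using rcis_cmod_Arg[of z] unfolding r_def t0_def rcis_def by (metis cis_mult mult.left_commute)
  define G1 G2 where
    "G1 \<theta> = f (disk_twist w (of_real r * cis \<theta>))" and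
    "G2 \<theta> = f (of_real r * cis \<theta>) * ennreal (poisson_kernel_disk (of_real r * cis \<theta>) w)" for \<theta>
  have [measurable]: "G1 \<in> borel_measurable borel" "G2 \<in> borel_measurable borel"
    unfolding G1_def G2_def poisson_kernel_disk_def by measurable
  have "G1 (x + 2*pi) = G1 x" "G2 (x + 2*pi) = G2 x" for x
    by (simp_all add: G1_def G2_def flip: cis_mult)
  note shift = nn_integral_periodic_translate[where f = G1, OF _ this(1) t0]
    nn_integral_periodic_translate[where f = G2, OF _ this(2) t0]
  have "(\<integral>\<^sup>+\<theta>. G1 \<theta> * indicator {0..2*pi} \<theta> \<partial>lborel) = (\<integral>\<^sup>+\<theta>. G2 \<theta> * indicator {0..2*pi} \<theta> \<partial>lborel)"
    unfolding G1_def G2_def using nn_integral_circle_disk_twist[OF _ r, of f "Arg w"] w_cis by simp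
  with shift show ?thesis
    by (simp add: rotate G1_def G2_def)
qed

lemma nn_integral_rotation_invariant_average:
  fixes \<mu> :: "complex measure" and g :: "complex \<Rightarrow> ennreal"
  assumes "sigma_finite_measure \<mu>" and sets: "sets \<mu> = sets borel"
    and rotation_invariant: "\<And>\<theta>. distr \<mu> borel (\<lambda>z. cis \<theta> * z) = \<mu>"
    and [measurable]: "g \<in> borel_measurable borel"
  shows "ennreal (2*pi) * (\<integral>\<^sup>+z. g z \<partial>\<mu>)
       = (\<integral>\<^sup>+z. (\<integral>\<^sup>+\<theta>. g (cis \<theta> * z) * indicator {0..2*pi} \<theta> \<partial>lborel) \<partial>\<mu>)"
proof -
  interpret pair_sigma_finite \<mu> lborel
    by (simp add: pair_sigma_finite_def assms(1) lborel.sigma_finite_measure_axioms)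
  have [measurable_cong]: "sets \<mu> = sets borel"
    by (rule sets)
  have rotate: "(\<integral>\<^sup>+z. g (cis \<theta> * z) \<partial>\<mu>) = (\<integral>\<^sup>+z. g z \<partial>\<mu>)" for \<theta>
    by (subst (2) rotation_invariant[of \<theta>, symmetric]) (simp add: nn_integral_distr)
  have "(\<integral>\<^sup>+z. (\<integral>\<^sup>+\<theta>. g (cis \<theta> * z) * indicator {0..2*pi} \<theta> \<partial>lborel) \<partial>\<mu>)
      = (\<integral>\<^sup>+\<theta>. (\<integral>\<^sup>+z. g (cis \<theta> * z) * indicator {0..2*pi} \<theta> \<partial>\<mu>) \<partial>lborel)"
    by (rule Fubini'[symmetric]) measurable
  also have "\<dots> = (\<integral>\<^sup>+\<theta>. (\<integral>\<^sup>+z. g z \<partial>\<mu>) * indicator {0..2*pi} \<theta> \<partial>lborel)"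
    by (simp add: nn_integral_multc rotate)
  also have "\<dots> = (\<integral>\<^sup>+z. g z \<partial>\<mu>) * ennreal (2*pi)"
    by (subst nn_integral_cmult_indicator) auto
  finally show ?thesis
    by (simp add: mult.commute)
qed

lemma distr_disk_twist_rotation_invariant:
  fixes \<mu> :: "complex measure"
  assumes "sigma_finite_measure \<mu>" and sets: "sets \<mu> = sets borel"
    and rotation_invariant: "\<And>\<theta>. distr \<mu> borel (\<lambda>z. cis \<theta> * z) = \<mu>"
    and in_disk: "AE z in \<mu>. cmod z < 1" and w: "cmod w = 1"
  shows "distr \<mu> borel (disk_twist w) = density \<mu> (\<lambda>z. ennreal (poisson_kernel_disk z w))"
proof (rule measure_eqI)
  fix A assume "A \<in> sets (distr \<mu> borel (disk_twist w))"
  then have [measurable]: "A \<in> sets borel"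
    by simp
  have [measurable_cong]: "sets \<mu> = sets borel"
    by (rule sets)
  define P where "P z = ennreal (poisson_kernel_disk z w)" for z
  have [measurable]: "P \<in> borel_measurable borel"
    unfolding P_def poisson_kernel_disk_def by measurable
  note average = nn_integral_rotation_invariant_average[OF assms(1) sets rotation_invariant]
  have "ennreal (2*pi) * (\<integral>\<^sup>+z. indicator A (disk_twist w z) \<partial>\<mu>)
      = (\<integral>\<^sup>+z. (\<integral>\<^sup>+\<theta>. indicator A (disk_twist w (cis \<theta> * z)) * indicator {0..2*pi} \<theta> \<partial>lborel) \<partial>\<mu>)"
    by (rule average) measurable
  also have "\<dots> = (\<integral>\<^sup>+z. (\<integral>\<^sup>+\<theta>. indicator A (cis \<theta> * z) * P (cis \<theta> * z) * indicator {0..2*pi} \<theta> \<partial>lborel) \<partial>\<mu>)"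
    using in_disk by (intro nn_integral_cong_AE) (auto simp: P_def nn_integral_rotations_disk_twist w)
  also have "\<dots> = ennreal (2*pi) * (\<integral>\<^sup>+z. indicator A z * P z \<partial>\<mu>)"
    by (rule average[symmetric]) measurable
  finally have twisted: "(\<integral>\<^sup>+z. indicator A (disk_twist w z) \<partial>\<mu>) = (\<integral>\<^sup>+z. P z * indicator A z \<partial>\<mu>)"
    by (simp add: ennreal_mult_cancel_left mult.commute)
  have "emeasure (distr \<mu> borel (disk_twist w)) A = (\<integral>\<^sup>+z. indicator A z \<partial>distr \<mu> borel (disk_twist w))"
    by simp
  also have "\<dots> = (\<integral>\<^sup>+z. indicator A (disk_twist w z) \<partial>\<mu>)"
    by (intro nn_integral_distr) measurable
  also have "\<dots> = emeasure (density \<mu> P) A"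
    by (simp add: twisted emeasure_density sets)
  finally show "emeasure (distr \<mu> borel (disk_twist w)) A = emeasure (density \<mu> P) A" .
qed (simp add: sets)

theorem mainTheorem12:
  fixes M :: "'a measure" and Z :: "'a \<Rightarrow> complex" and w :: complex
  assumes "prob_space M"
    and "Z \<in> borel_measurable M"
    and "\<And>\<omega>. \<omega> \<in> space M \<Longrightarrow> Z \<omega> \<in> ball 0 1"
    and "\<And>\<theta>::real. distr M borel (\<lambda>\<omega>. cis \<theta> * Z \<omega>) = distr M borel Z"
    and "cmod w = 1"
  shows "(\<forall>z \<in> ball 0 1 - {0}.
            complex_of_real (cmod z) * disk_mobius (- (complex_of_real (cmod z) * w)) (z / complex_of_real (cmod z))
              = z * (1 + cnj z * w) / (1 + z * cnj w))
         \<and> distr M borel (\<lambda>\<omega>. Z \<omega> * (1 + cnj (Z \<omega>) * w) / (1 + Z \<omega> * cnj w))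
             = density (distr M borel Z) (\<lambda>z. ennreal (poisson_kernel_disk z w))"
proof (intro conjI ballI)
  show "complex_of_real (cmod z) * disk_mobius (- (complex_of_real (cmod z) * w)) (z / complex_of_real (cmod z))
          = z * (1 + cnj z * w) / (1 + z * cnj w)" if "z \<in> ball 0 1 - {0}" for z
    using that disk_mobius_polar_eq_disk_twist[of z w] by (simp add: disk_twist_def)
next
  interpret M: prob_space M by fact
  note [measurable] = assms(2)
  have "prob_space (distr M borel Z)"
    by (rule M.prob_space_distr) measurable
  moreover have "distr (distr M borel Z) borel (\<lambda>z. cis \<theta> * z) = distr M borel Z" for \<theta>
    by (subst distr_distr) (auto simp: comp_def assms(4))
  moreover have "AE z in distr M borel Z. cmod z < 1"
    using assms(3) by (subst AE_distr_iff) (auto intro!: AE_I2)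
  ultimately have "distr (distr M borel Z) borel (disk_twist w)
      = density (distr M borel Z) (\<lambda>z. ennreal (poisson_kernel_disk z w))"
    by (intro distr_disk_twist_rotation_invariant assms(5) prob_space_imp_sigma_finite) auto
  then show "distr M borel (\<lambda>\<omega>. Z \<omega> * (1 + cnj (Z \<omega>) * w) / (1 + Z \<omega> * cnj w))
      = density (distr M borel Z) (\<lambda>z. ennreal (poisson_kernel_disk z w))"
    by (subst (asm) distr_distr) (auto simp: comp_def disk_twist_def)
qed

end
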